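(* The product of finitely many Krasinkiewicz spaces is a Krasinkiewicz space.
   Context: For a compact metrizable $X$, a map $g\colon X\to M$ is Krasinkiewicz if every subcontinuum of $X$ is either contained in a fiber of $g$ or contains a component of some fiber of $g$; a metrizable space $M$ is a Krasinkiewicz space if for every compact metrizable $X$ the Krasinkiewicz maps are dense in $C(X,M)$ with the uniform topology. *)

theory Defs
  imports "HOL-Analysis.Analysis"
begin

definition subcontinuum :: "'x topology \<Rightarrow> 'x set \<Rightarrow> bool" where
  "subcontinuum X C \<longleftrightarrow> C \<noteq> {} \<and> compactin X C \<and> connectedin X C"

definition krasinkiewicz_map :: "'x topology \<Rightarrow> 'a topology \<Rightarrow> ('x \<Rightarrow> 'a) \<Rightarrow> bool" where
  "krasinkiewicz_map X M g \<longleftrightarrow>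
     continuous_map X M g \<and>
     (\<forall>C. subcontinuum X C \<longrightarrow>
        (\<exists>y\<in>topspace M. C \<subseteq> {x \<in> topspace X. g x = y}) \<or>
        (\<exists>y\<in>topspace M. \<exists>K \<in> connected_components_of
              (subtopology X {x \<in> topspace X. g x = y}). K \<subseteq> C))"

text \<open>Compact metrizable spaces have cardinality at most
  the continuum, so up to homeomorphism they are exactly the compact metrizable
  topologies on subsets of the real line (carrier type real).\<close>
definition krasinkiewicz_space :: "'a topology \<Rightarrow> bool" where
  "krasinkiewicz_space M \<longleftrightarrow>
     metrizable_space M \<and>
     (\<forall>m. mtopology_of m = M \<longrightarrow>
       (\<forall>X :: real topology. compact_space X \<and> metrizable_space X \<longrightarrow>
         (\<forall>f. continuous_map X M f \<longrightarrow>
           (\<forall>\<epsilon>>0. \<exists>g. krasinkiewicz_map X M g \<and>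
                 (\<forall>x\<in>topspace X. mdist m (f x) (g x) < \<epsilon>)))))"

end

theory Submission
  imports Defs
begin

(* Let M = prod_{i in I} M_i with I finite, fix compatible metrics d_i on the M_i and
   an arbitrary compatible metric m on M.  The proof has two independent halves.

   Topological half: if every coordinate g_i of a continuous g : X -> M is a
   Krasinkiewicz map, so is g.  A subcontinuum C either lies in a fibre of every g_i,
   hence in a fibre of g; or some g_i has a fibre component K inside C, and since the
   fibre of g through a point of K lies in that g_i-fibre, its component is inside K.

   Metric half: on a compact set f(X) the metric m is uniformly dominated by the
   coordinatewise balls of the d_i: for every e > 0 there is r > 0 such that the
   "coordinate ball" of radius r around any point of f(X) lies in its m-ball of
   radius e.  This uses finiteness of I and a finite subcover of f(X).

   The theorem follows by approximating each coordinate f_i within r by a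
   Krasinkiewicz map and assembling the approximations. *)

section \<open>Krasinkiewicz maps into products\<close>

lemma connected_component_refinement:
  assumes "S \<subseteq> T" and K: "K \<in> connected_components_of (subtopology X T)"
    and x: "x \<in> K" "x \<in> S"
  shows "\<exists>L\<in>connected_components_of (subtopology X S). L \<subseteq> K"
proof -
  define L where "L = connected_component_of_set (subtopology X S) x"
  have xX: "x \<in> topspace X"
    using connected_components_of_subset[OF K] x(1) by auto
  have "L \<in> connected_components_of (subtopology X S)"
    unfolding L_def connected_component_in_connected_components_of using xX x(2) by simp
  moreover have "connectedin (subtopology X T) L"
    using connectedin_connected_component_of[of "subtopology X S" x] \<open>S \<subseteq> T\<close>
    unfolding L_def by (auto simp: connectedin_subtopology)
  moreover have "x \<in> L"
    unfolding L_def using xX x(2) by (simp add: connected_component_of_refl)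
  ultimately show ?thesis
    using connected_components_of_maximal[OF K] x(1) by (meson disjnt_iff)
qed

lemma krasinkiewicz_map_product:
  assumes cont: "continuous_map X (product_topology M I) g"
    and coords: "\<forall>i\<in>I. krasinkiewicz_map X (M i) (\<lambda>x. g x i)"
  shows "krasinkiewicz_map X (product_topology M I) g"
  unfolding krasinkiewicz_map_def
proof (intro conjI allI impI cont)
  fix C assume C: "subcontinuum X C"
  then obtain c where c: "c \<in> C" and CX: "C \<subseteq> topspace X"
    by (auto simp: subcontinuum_def compactin_def)
  have g_in: "g x \<in> topspace (product_topology M I)" if "x \<in> topspace X" for x
    using continuous_map_image_subset_topspace[OF cont] that by blast
  show "(\<exists>y\<in>topspace (product_topology M I). C \<subseteq> {x \<in> topspace X. g x = y}) \<or>
        (\<exists>y\<in>topspace (product_topology M I). \<exists>K \<in> connected_components_of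
              (subtopology X {x \<in> topspace X. g x = y}). K \<subseteq> C)"
  proof (cases "\<forall>i\<in>I. \<exists>y. C \<subseteq> {x \<in> topspace X. g x i = y}")
    case True
    have "g x = g c" if "x \<in> C" for x
    proof (rule PiE_ext)
      show "g x \<in> PiE I (\<lambda>i. topspace (M i))" "g c \<in> PiE I (\<lambda>i. topspace (M i))"
        using g_in that c CX by (metis subsetD topspace_product_topology)+
      show "g x i = g c i" if "i \<in> I" for i
        using True that \<open>x \<in> C\<close> c by (metis (mono_tags, lifting) mem_Collect_eq subsetD)
    qed
    then have "C \<subseteq> {x \<in> topspace X. g x = g c}" using CX by auto
    then show ?thesis using g_in c CX by blast
  next
    case False
    text \<open>Some coordinate \<open>g_i\<close> is not constant on \<open>C\<close>, so \<open>C\<close> contains a component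
      \<open>K\<close> of a fibre of \<open>g_i\<close>; the fibre of \<open>g\<close> through a point of \<open>K\<close> refines it.\<close>
    then obtain i where i: "i \<in> I"
      and not_in_fibre: "\<not> (\<exists>y\<in>topspace (M i). C \<subseteq> {x \<in> topspace X. g x i = y})"
      by blast
    obtain y K where K: "K \<in> connected_components_of (subtopology X {x \<in> topspace X. g x i = y})"
      and KC: "K \<subseteq> C"
      using coords i C not_in_fibre unfolding krasinkiewicz_map_def by blast
    obtain x0 where x0: "x0 \<in> K"
      using nonempty_connected_components_of[OF K] by blast
    have x0X: "x0 \<in> topspace X" and "g x0 i = y"
      using connected_components_of_subset[OF K] x0 by auto
    then have "{x \<in> topspace X. g x = g x0} \<subseteq> {x \<in> topspace X. g x i = y}" by auto
    then obtain L where "L \<in> connected_components_of (subtopology X {x \<in> topspace X. g x = g x0})"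
      and "L \<subseteq> K"
      using connected_component_refinement[OF _ K x0] x0X by blast
    then show ?thesis using g_in[OF x0X] KC by blast
  qed
qed

section \<open>Coordinate balls in a finite product of metric spaces\<close>

definition coord_ball :: "('i \<Rightarrow> 'a metric) \<Rightarrow> 'i set \<Rightarrow> ('i \<Rightarrow> 'a) \<Rightarrow> real \<Rightarrow> ('i \<Rightarrow> 'a) set"
  where "coord_ball d I p r = PiE I (\<lambda>i. mball_of (d i) (p i) r)"

lemma openin_mball_of: "openin (mtopology_of m) (mball_of m x r)"
  by (simp add: mtopology_of_def mball_of_def Metric_space.openin_mball)

lemma centre_in_mball_of: "x \<in> mspace m \<Longrightarrow> 0 < r \<Longrightarrow> x \<in> mball_of m x r"
  by (simp add: mball_of_def Metric_space.centre_in_mball_iff)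

lemma topspace_product_metric:
  assumes "\<forall>i\<in>I. mtopology_of (d i) = M i"
  shows "topspace (product_topology M I) = PiE I (\<lambda>i. mspace (d i))"
  unfolding topspace_product_topology by (rule PiE_cong) (metis assms topspace_mtopology_of)

lemma openin_coord_ball:
  assumes "finite I" and "\<forall>i\<in>I. mtopology_of (d i) = M i"
  shows "openin (product_topology M I) (coord_ball d I p r)"
proof -
  have "\<forall>i\<in>I. openin (M i) (mball_of (d i) (p i) r)"
    using assms(2) openin_mball_of by metis
  then show ?thesis
    unfolding coord_ball_def using assms(1) by (simp add: openin_PiE)
qed

lemma centre_in_coord_ball:
  assumes "p \<in> PiE I (\<lambda>i. mspace (d i))" and "r > 0"
  shows "p \<in> coord_ball d I p r"
proof -
  have "p i \<in> mball_of (d i) (p i) r" if "i \<in> I" for i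
    using assms that by (intro centre_in_mball_of) (auto simp: PiE_iff)
  moreover have "p \<in> extensional I" using assms(1) by (simp add: PiE_iff)
  ultimately show ?thesis unfolding coord_ball_def PiE_iff by blast
qed

lemma coord_ball_triangle:
  assumes "q \<in> coord_ball d I p a" and "z \<in> coord_ball d I q b"
  shows "z \<in> coord_ball d I p (a + b)"
  unfolding coord_ball_def PiE_iff
proof (intro conjI ballI)
  show "z \<in> extensional I" using assms(2) by (simp add: coord_ball_def PiE_iff)
  fix i assume i: "i \<in> I"
  have pq: "mdist (d i) (p i) (q i) < a" and qz: "mdist (d i) (q i) (z i) < b"
    and sp: "p i \<in> mspace (d i)" "q i \<in> mspace (d i)" "z i \<in> mspace (d i)"
    using assms i by (auto simp: coord_ball_def PiE_iff)
  have "mdist (d i) (p i) (z i) \<le> mdist (d i) (p i) (q i) + mdist (d i) (q i) (z i)"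
    using sp by (rule mdist_triangle)
  then show "z i \<in> mball_of (d i) (p i) (a + b)" using pq qz sp by simp
qed

lemma coord_ball_mono: "r \<le> s \<Longrightarrow> coord_ball d I p r \<subseteq> coord_ball d I p s"
  unfolding coord_ball_def by (rule PiE_mono) auto

lemma coord_ball_inside_open:
  assumes fin: "finite I" and compat: "\<forall>i\<in>I. mtopology_of (d i) = M i"
    and S: "openin (product_topology M I) S" and p: "p \<in> S"
  shows "\<exists>r>0. coord_ball d I p r \<subseteq> S"
proof -
  obtain U where U: "\<forall>i\<in>I. openin (M i) (U i)" "p \<in> PiE I U" "PiE I U \<subseteq> S"
    using S p unfolding openin_product_topology_alt by blast
  have "\<exists>R>0. mball_of (d i) (p i) R \<subseteq> U i" if i: "i \<in> I" for i
  proof -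
    have "openin (mtopology_of (d i)) (U i)" using U(1) compat i by simp
    moreover have "p i \<in> U i" using U(2) i by (simp add: PiE_mem)
    ultimately show ?thesis
      by (simp add: mtopology_of_def mball_of_def Metric_space.openin_mtopology)
  qed
  then obtain R where R: "\<forall>i\<in>I. R i > 0 \<and> mball_of (d i) (p i) (R i) \<subseteq> U i"
    by metis
  define r where "r = Min (insert 1 (R ` I))"
  have "r > 0" unfolding r_def using fin R by simp
  moreover have "coord_ball d I p r \<subseteq> PiE I U"
  proof -
    have "mball_of (d i) (p i) r \<subseteq> U i" if "i \<in> I" for i
    proof -
      have "r \<le> R i" unfolding r_def using fin that by simp
      then have "mball_of (d i) (p i) r \<subseteq> mball_of (d i) (p i) (R i)" by auto
      then show ?thesis using R that by blast
    qed
    then show ?thesis unfolding coord_ball_def by (rule PiE_mono)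
  qed
  ultimately show ?thesis using U(3) by blast
qed

lemma compact_finite_coord_ball_cover:
  assumes fin: "finite I" and compat: "\<forall>i\<in>I. mtopology_of (d i) = M i"
    and K: "compactin (product_topology M I) K" and R: "\<forall>p\<in>K. R p > 0"
  shows "\<exists>T. T \<subseteq> K \<and> finite T \<and> K \<subseteq> (\<Union>t\<in>T. coord_ball d I t (R t))"
proof -
  let ?balls = "(\<lambda>p. coord_ball d I p (R p)) ` K"
  have balls_open: "openin (product_topology M I) B" if "B \<in> ?balls" for B
    using that openin_coord_ball[OF fin compat] by blast
  have K_sub: "K \<subseteq> PiE I (\<lambda>i. mspace (d i))"
    using compactin_subset_topspace[OF K] topspace_product_metric[OF compat] by simp
  have cover: "K \<subseteq> \<Union>?balls"
  proof
    fix p assume "p \<in> K"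
    then have "p \<in> coord_ball d I p (R p)"
      using K_sub R by (intro centre_in_coord_ball) auto
    then show "p \<in> \<Union>?balls" using \<open>p \<in> K\<close> by blast
  qed
  obtain \<F> where F: "finite \<F>" "\<F> \<subseteq> ?balls" "K \<subseteq> \<Union>\<F>"
    using compactinD[OF K balls_open cover] by metis
  obtain T where "T \<subseteq> K" "finite T" "\<F> = (\<lambda>p. coord_ball d I p (R p)) ` T"
    using finite_subset_image[OF F(1,2)] by metis
  then show ?thesis using F(3) by auto
qed

lemma uniform_coord_radius:
  assumes fin: "finite I" and compat: "\<forall>i\<in>I. mtopology_of (d i) = M i"
    and m: "mtopology_of m = product_topology M I"
    and K: "compactin (product_topology M I) K" and e: "e > 0"
  shows "\<exists>r>0. \<forall>p\<in>K. coord_ball d I p r \<subseteq> mball_of m p e"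
proof -
  text \<open>Local radii, by continuity of the identity at each point of \<open>K\<close>.\<close>
  have "\<exists>R>0. coord_ball d I p R \<subseteq> mball_of m p (e/2)" if "p \<in> K" for p
  proof (rule coord_ball_inside_open[OF fin compat])
    show "openin (product_topology M I) (mball_of m p (e/2))"
      using openin_mball_of m by metis
    have "p \<in> topspace (product_topology M I)"
      using compactin_subset_topspace[OF K] that by blast
    then have "p \<in> mspace m"
      using m by (metis topspace_mtopology_of)
    then show "p \<in> mball_of m p (e/2)"
      using e by (intro centre_in_mball_of) simp_all
  qed
  then obtain R where R: "\<forall>p\<in>K. R p > 0 \<and> coord_ball d I p (R p) \<subseteq> mball_of m p (e/2)"
    by metis
  text \<open>Finitely many balls of half the local radii cover \<open>K\<close>; their least radius works.\<close>
  obtain T where T: "T \<subseteq> K" "finite T" "K \<subseteq> (\<Union>t\<in>T. coord_ball d I t (R t / 2))"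
    using compact_finite_coord_ball_cover[OF fin compat K, of "\<lambda>p. R p / 2"] R by auto
  define r where "r = Min (insert 1 ((\<lambda>t. R t / 2) ` T))"
  have r: "r > 0" unfolding r_def using T R by auto
  have r_le: "r \<le> R t / 2" if "t \<in> T" for t
    unfolding r_def using T(2) that by (intro Min_le) auto
  have "coord_ball d I p r \<subseteq> mball_of m p e" if p: "p \<in> K" for p
  proof
    fix q assume q: "q \<in> coord_ball d I p r"
    obtain t where t: "t \<in> T" "p \<in> coord_ball d I t (R t / 2)" using T(3) p by blast
    have Rt: "R t > 0" "coord_ball d I t (R t) \<subseteq> mball_of m t (e/2)"
      using R T(1) t(1) by auto
    have "q \<in> coord_ball d I t (R t / 2 + r)" using coord_ball_triangle[OF t(2) q] .
    then have "q \<in> coord_ball d I t (R t)"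
      using coord_ball_mono[of "R t / 2 + r" "R t"] r_le[OF t(1)] by auto
    moreover have "p \<in> coord_ball d I t (R t)"
      using t(2) coord_ball_mono[of "R t / 2" "R t"] Rt(1) by auto
    ultimately have pt: "p \<in> mball_of m t (e/2)" and qt: "q \<in> mball_of m t (e/2)"
      using Rt(2) by blast+
    have "mdist m p q \<le> mdist m p t + mdist m t q"
      using pt qt by (intro mdist_triangle) auto
    also have "\<dots> < e"
      using pt qt by (simp add: mdist_commute)
    finally show "q \<in> mball_of m p e" using pt qt by simp
  qed
  then show ?thesis using r by blast
qed

lemma krasinkiewicz_space_approximation:
  fixes X :: "real topology"
  assumes "krasinkiewicz_space M" and "mtopology_of m = M"
    and "compact_space X" "metrizable_space X"
    and "continuous_map X M f" and "\<epsilon> > 0"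
  shows "\<exists>g. krasinkiewicz_map X M g \<and> (\<forall>x\<in>topspace X. mdist m (f x) (g x) < \<epsilon>)"
  using assms unfolding krasinkiewicz_space_def by blast

lemma krasinkiewicz_coordinate_approximation:
  fixes X :: "real topology"
  assumes kras: "\<forall>i\<in>I. krasinkiewicz_space (M i)"
    and compat: "\<forall>i\<in>I. mtopology_of (d i) = M i"
    and X: "compact_space X" "metrizable_space X"
    and f: "continuous_map X (product_topology M I) f" and r: "r > 0"
  shows "\<exists>g. krasinkiewicz_map X (product_topology M I) g \<and>
             (\<forall>x\<in>topspace X. g x \<in> coord_ball d I (f x) r)"
proof -
  have f_coord: "continuous_map X (M i) (\<lambda>x. f x i)" if "i \<in> I" for i
    using f that by (simp add: continuous_map_componentwise)
  have "\<exists>G. krasinkiewicz_map X (M i) G \<and> (\<forall>x\<in>topspace X. mdist (d i) (f x i) (G x) < r)"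
    if i: "i \<in> I" for i
    using krasinkiewicz_space_approximation[OF _ _ X f_coord[OF i] r] kras compat i by blast
  then obtain G where G: "\<forall>i\<in>I. krasinkiewicz_map X (M i) (G i) \<and>
                             (\<forall>x\<in>topspace X. mdist (d i) (f x i) (G i x) < r)"
    by metis
  define g where "g x = restrict (\<lambda>i. G i x) I" for x
  have g_coord: "(\<lambda>x. g x i) = G i" if "i \<in> I" for i
    using that by (simp add: g_def)
  have G_cont: "continuous_map X (M i) (G i)" if "i \<in> I" for i
    using G that unfolding krasinkiewicz_map_def by blast
  have g_cont: "continuous_map X (product_topology M I) g"
    unfolding continuous_map_componentwise
  proof (intro conjI ballI)
    show "g ` topspace X \<subseteq> extensional I" by (auto simp: g_def)
    show "continuous_map X (M i) (\<lambda>x. g x i)" if "i \<in> I" for i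
      using G_cont[OF that] g_coord[OF that] by simp
  qed
  have "krasinkiewicz_map X (product_topology M I) g"
    using krasinkiewicz_map_product[OF g_cont] G g_coord by simp
  moreover have "g x \<in> coord_ball d I (f x) r" if x: "x \<in> topspace X" for x
  proof -
    have "f x i \<in> mspace (d i)" "G i x \<in> mspace (d i)" if i: "i \<in> I" for i
    proof -
      have "f x i \<in> topspace (M i)" "G i x \<in> topspace (M i)"
        using continuous_map_image_subset_topspace[OF f_coord[OF i]]
              continuous_map_image_subset_topspace[OF G_cont[OF i]] x by auto
      then show "f x i \<in> mspace (d i)" "G i x \<in> mspace (d i)"
        using compat i by (metis topspace_mtopology_of)+
    qed
    then show ?thesis using G x by (auto simp: coord_ball_def g_def)
  qed
  ultimately show ?thesis by blast
qed

lemma metrizable_space_mtopology_of: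
  assumes "metrizable_space X"
  shows "\<exists>m. mtopology_of m = X"
  using assms unfolding metrizable_space_def by (metis Metric_space.mtopology_of)

theorem proposition3p5:
  fixes M :: "'i \<Rightarrow> 'a topology" and I :: "'i set"
  assumes "finite I"
    and "\<forall>i\<in>I. krasinkiewicz_space (M i)"
  shows "krasinkiewicz_space (product_topology M I)"
proof -
  have metrizable: "\<forall>i\<in>I. metrizable_space (M i)"
    using assms(2) unfolding krasinkiewicz_space_def by blast
  then have "metrizable_space (product_topology M I)"
    using \<open>finite I\<close> by (simp add: metrizable_space_product_topology countable_finite)
  have "\<forall>i\<in>I. \<exists>m. mtopology_of m = M i"
    using metrizable metrizable_space_mtopology_of by blast
  then obtain d where compat: "\<forall>i\<in>I. mtopology_of (d i) = M i"
    by metis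
  show ?thesis
    unfolding krasinkiewicz_space_def
  proof (intro conjI allI impI \<open>metrizable_space (product_topology M I)\<close>)
    fix m :: "('i \<Rightarrow> 'a) metric" and X :: "real topology" and f and e :: real
    assume m: "mtopology_of m = product_topology M I"
      and X: "compact_space X \<and> metrizable_space X"
      and f: "continuous_map X (product_topology M I) f" and e: "0 < e"
    have "compactin (product_topology M I) (f ` topspace X)"
      using image_compactin[OF _ f] X unfolding compact_space_def by blast
    then obtain r where r: "r > 0"
      and balls: "\<forall>x\<in>topspace X. coord_ball d I (f x) r \<subseteq> mball_of m (f x) e"
      using uniform_coord_radius[OF \<open>finite I\<close> compat m _ e] by blast
    obtain g where g: "krasinkiewicz_map X (product_topology M I) g"
      and near: "\<forall>x\<in>topspace X. g x \<in> coord_ball d I (f x) r"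
      using krasinkiewicz_coordinate_approximation[OF assms(2) compat _ _ f r] X by blast
    have "g x \<in> mball_of m (f x) e" if "x \<in> topspace X" for x
      using balls near that by blast
    then show "\<exists>g. krasinkiewicz_map X (product_topology M I) g \<and>
                 (\<forall>x\<in>topspace X. mdist m (f x) (g x) < e)"
      using g by auto
  qed
qed

end
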